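(* Let $N_{\rm q}\ge1$ and $N\ge 2$ be integers, let $\rho$ be an $N_{\rm q}$-qubit density matrix with eigenvalues $\lambda_1\ge\lambda_2\ge\dots\ge\lambda_{2^{N_{\rm q}}}\ge 0$, and let $\tilde{\boldsymbol\lambda}=[\lambda_2,\dots,\lambda_{2^{N_{\rm q}}}]^{\rm T}$. For a function $g$ write $\mathbb{E}\{g(\lambda)\}=\frac{1}{2^{N_{\rm q}}-1}\sum_{i=2}^{2^{N_{\rm q}}}g(\lambda_i)$, let $\mu=\mathbb{E}\{\lambda\}$ and assume $\mu>0$. Define the relative noise bandwidth $b(\tilde{\boldsymbol\lambda})=\mu^{-1}\sqrt{\mathbb{E}\{|\lambda-\mu|^2\}}$. For $\boldsymbol\beta\in\mathbb{R}^{N-1}$ let $\tilde\epsilon(\boldsymbol\beta)=\mathbb{E}\{|\lambda\prod_{n=1}^{N-1}(\lambda-\beta_n)|\}$ and define the error ratio $R(\boldsymbol\beta)=\tilde\epsilon(\boldsymbol\beta)/\tilde\epsilon(\mathbf 0)$. Let $\boldsymbol\beta=\mu\mathbf 1_{N-1}$ (the $N$-th order Type-1 permutation filter). Then $$R(\boldsymbol\beta)\le\frac{1}{\mu}\Big[b(\tilde{\boldsymbol\lambda})\sqrt{2^{N_{\rm q}}-1}\Big]^{N-1},$$ which describes the scaling of the error ratio as $b(\tilde{\boldsymbol\lambda})\to 0$.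
   Context: An $N$-th order permutation filter with zeros $0,\beta_1,\dots,\beta_{N-1}$ maps $\rho$ to $\rho\prod_{n=1}^{N-1}(\rho-\beta_nI)$; the choice $\boldsymbol\beta=\mathbf 0$ corresponds to $N$-th order virtual distillation ($\rho\mapsto\rho^N$). The expectation $\mathbb{E}$ is taken over the spectral distribution of the nondominant eigenvalues $\lambda_2,\dots,\lambda_{2^{N_{\rm q}}}$ of $\rho$, each with equal weight. *)

theory Defs
  imports "HOL-Analysis.Analysis" "Jordan_Normal_Form.Schur_Decomposition"
begin

definition mtrace :: "complex mat \<Rightarrow> complex" where
  "mtrace A = (\<Sum>i<dim_row A. A $$ (i, i))"

definition density_matrix :: "nat \<Rightarrow> complex mat \<Rightarrow> bool" where
  "density_matrix d \<rho> \<longleftrightarrow> \<rho> \<in> carrier_mat d d \<and> mat_adjoint \<rho> = \<rho> \<and>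
     (\<forall>v \<in> carrier_vec d. 0 \<le> Re (conjugate v \<bullet> (\<rho> *\<^sub>v v))) \<and> mtrace \<rho> = 1"

definition Exp_nd :: "nat \<Rightarrow> (nat \<Rightarrow> real) \<Rightarrow> (real \<Rightarrow> real) \<Rightarrow> real" where
  "Exp_nd Nq lam g = (1 / (2 ^ Nq - 1)) * (\<Sum>i = 2..2 ^ Nq. g (lam i))"

definition mu_nd :: "nat \<Rightarrow> (nat \<Rightarrow> real) \<Rightarrow> real" where
  "mu_nd Nq lam = Exp_nd Nq lam (\<lambda>x. x)"

definition bandwidth :: "nat \<Rightarrow> (nat \<Rightarrow> real) \<Rightarrow> real" where
  "bandwidth Nq lam = (1 / mu_nd Nq lam) * sqrt (Exp_nd Nq lam (\<lambda>x. \<bar>x - mu_nd Nq lam\<bar> ^ 2))"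

definition eps_tilde :: "nat \<Rightarrow> nat \<Rightarrow> (nat \<Rightarrow> real) \<Rightarrow> (nat \<Rightarrow> real) \<Rightarrow> real" where
  "eps_tilde Nq N lam \<beta> = Exp_nd Nq lam (\<lambda>x. \<bar>x * (\<Prod>n = 1..N - 1. (x - \<beta> n))\<bar>)"

definition error_ratio :: "nat \<Rightarrow> nat \<Rightarrow> (nat \<Rightarrow> real) \<Rightarrow> (nat \<Rightarrow> real) \<Rightarrow> real" where
  "error_ratio Nq N lam \<beta> = eps_tilde Nq N lam \<beta> / eps_tilde Nq N lam (\<lambda>_. 0)"

end

(*
  Write M = 2^Nq - 1 for the number of nondominant eigenvalues and
  S = sqrt (sum_i (lambda_i - mu)^2) = mu * b * sqrt M.  Every deviation |lambda_i - mu| is at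
  most S, so the numerator E{lambda |lambda - mu|^(N-1)} is at most S^(N-1) mu, while Jensen's
  inequality for t^N gives E{lambda^N} >= mu^N; hence R <= (S / mu)^(N-1).  The extra factor
  1 / mu >= 1 comes from mu <= 1: the eigenvalues sum to tr rho = 1 (read off a Schur
  triangularisation of rho), so the nondominant ones sum to at most 1.
*)
theory Submission
  imports Defs
begin

lemma degree_prod_linear_factors:
  fixes a :: "'b \<Rightarrow> 'a :: idom"
  shows "degree (\<Prod>i\<in>S. [:- a i, 1:]) = card S"
  by (cases "finite S") (simp_all add: degree_prod_sum_eq)

lemma monic_prod_linear_factors:
  fixes a :: "'b \<Rightarrow> 'a :: idom"
  shows "lead_coeff (\<Prod>i\<in>S. [:- a i, 1:]) = 1"
  unfolding lead_coeff_prod by simp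

lemma coeff_prod_linear_factors_subleading:
  fixes a :: "'b \<Rightarrow> 'a :: idom"
  assumes "finite S" "S \<noteq> {}"
  shows "coeff (\<Prod>i\<in>S. [:- a i, 1:]) (card S - 1) = - (\<Sum>i\<in>S. a i)"
  using assms
proof (induction S rule: finite_ne_induct)
  case (singleton x)
  then show ?case by simp
next
  case (insert x S)
  define P where "P = (\<Prod>i\<in>S. [:- a i, 1:])"
  obtain n where n: "card S = Suc n"
    using insert.hyps(1,2) by (metis card_gt_0_iff gr0_implies_Suc)
  have "coeff P (Suc n) = 1"
    using monic_prod_linear_factors[of a S] degree_prod_linear_factors[of a S] n
    unfolding P_def by simp
  moreover have "(\<Prod>i\<in>insert x S. [:- a i, 1:]) = [:- a x, 1:] * P"
    unfolding P_def using insert.hyps by simp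
  ultimately show ?case
    using insert.IH insert.hyps n unfolding P_def[symmetric] by simp
qed

lemma mtrace_mult_comm:
  assumes "A \<in> carrier_mat n m" and "B \<in> carrier_mat m n"
  shows "mtrace (A * B) = mtrace (B * A)"
proof -
  have "mtrace (A * B) = (\<Sum>i<n. \<Sum>k<m. A $$ (i, k) * B $$ (k, i))"
    unfolding mtrace_def using assms
    by (intro sum.cong) (auto simp: scalar_prod_def atLeast0LessThan)
  also have "\<dots> = (\<Sum>k<m. \<Sum>i<n. B $$ (k, i) * A $$ (i, k))"
    by (subst sum.swap) (simp add: mult.commute)
  also have "\<dots> = mtrace (B * A)"
    unfolding mtrace_def using assms
    by (intro sum.cong) (auto simp: scalar_prod_def atLeast0LessThan)
  finally show ?thesis .
qed

lemma mtrace_similar: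
  assumes "similar_mat A B"
  shows "mtrace A = mtrace B"
proof -
  obtain n P Q where carrier: "{A, B, P, Q} \<subseteq> carrier_mat n n"
    and inverse: "Q * P = 1\<^sub>m n" and A_eq: "A = P * B * Q"
    using similar_matD[OF assms] by blast
  have "mtrace A = mtrace (Q * (P * B))"
    unfolding A_eq using carrier by (intro mtrace_mult_comm[of _ n n]) auto
  also have "Q * (P * B) = B"
    using carrier inverse by (auto simp: assoc_mult_mat[symmetric, of Q n n P n B n])
  finally show ?thesis .
qed

lemma mtrace_eq_sum_eigenvalues:
  fixes A :: "complex mat"
  assumes A: "A \<in> carrier_mat n n" and "finite I"
    and char_poly_A: "char_poly A = (\<Prod>i\<in>I. [:- e i, 1:])"
  shows "mtrace A = (\<Sum>i\<in>I. e i)"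
proof -
  obtain es where "distinct es" "set es = I"
    using \<open>finite I\<close> finite_distinct_list by blast
  then have "char_poly A = (\<Prod>a \<leftarrow> map e es. [:- a, 1:])"
    using prod.distinct_set_conv_list[of es "\<lambda>i. [:- e i, 1:]"] unfolding char_poly_A
    by (simp add: o_def)
  then obtain B where B: "B \<in> carrier_mat n n" "upper_triangular B" "similar_mat A B"
    using schur_decomposition_exists[OF A] by blast
  have "char_poly B = (\<Prod>a \<leftarrow> diag_mat B. [:- a, 1:])"
    by (rule char_poly_upper_triangular[OF B(1,2)])
  also have "\<dots> = (\<Prod>i<n. [:- B $$ (i, i), 1:])"
    using B(1) unfolding diag_mat_def
    by (simp add: prod.distinct_set_conv_list[symmetric] atLeast0LessThan)
  finally have char_poly_eq: "(\<Prod>i<n. [:- B $$ (i, i), 1:]) = (\<Prod>i\<in>I. [:- e i, 1:])"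
    using char_poly_similar[OF B(3)] char_poly_A by simp
  then have "card I = n"
    using degree_prod_linear_factors[of e I] degree_prod_linear_factors[of "\<lambda>i. B $$ (i, i)" "{..<n}"]
    by simp
  have "mtrace A = (\<Sum>i<n. B $$ (i, i))"
    using mtrace_similar[OF B(3)] B(1) unfolding mtrace_def by simp
  also have "\<dots> = (\<Sum>i\<in>I. e i)"
  proof (cases "n = 0")
    case True
    then show ?thesis using \<open>card I = n\<close> \<open>finite I\<close> by simp
  next
    case False
    then show ?thesis
      using char_poly_eq \<open>card I = n\<close> \<open>finite I\<close>
        coeff_prod_linear_factors_subleading[of "{..<n}" "\<lambda>i. B $$ (i, i)"]
        coeff_prod_linear_factors_subleading[of I e]
      by fastforce
  qed
  finally show ?thesis .
qed

lemma density_matrix_eigenvalues_sum: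
  assumes "density_matrix n \<rho>"
    and "char_poly \<rho> = (\<Prod>i = 1..n. [:- complex_of_real (lam i), 1:])"
  shows "(\<Sum>i = 1..n. lam i) = 1"
proof -
  have "complex_of_real (\<Sum>i = 1..n. lam i) = mtrace \<rho>"
    using assms mtrace_eq_sum_eigenvalues[of \<rho> n "{1..n}"]
    unfolding density_matrix_def by simp
  also have "\<dots> = 1"
    using assms(1) unfolding density_matrix_def by simp
  finally show ?thesis by (simp only: of_real_eq_1_iff)
qed

lemma power_ge_tangent_line:
  fixes x m :: real
  assumes "x \<ge> 0" "m > 0"
  shows "m ^ n + real n * m ^ (n - 1) * (x - m) \<le> x ^ n"
proof (cases n)
  case 0
  then show ?thesis by simp
next
  case (Suc k)
  have "1 + real n * (x / m - 1) \<le> (1 + (x / m - 1)) ^ n"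
    using assms by (intro Bernoulli_inequality) (simp add: field_simps)
  then have "m ^ n * (1 + real n * (x / m - 1)) \<le> m ^ n * (x / m) ^ n"
    using assms by (intro mult_left_mono) auto
  also have "m ^ n * (x / m) ^ n = x ^ n"
    using assms by (simp add: power_divide)
  also have "m ^ n * (1 + real n * (x / m - 1)) = m ^ n + real n * m ^ (n - 1) * (x - m)"
    using assms Suc by (simp add: field_simps)
  finally show ?thesis .
qed

lemma card_mult_mean_power_le_sum_power:
  fixes x :: "'a \<Rightarrow> real" and \<mu> :: real
  assumes "finite I" "\<And>i. i \<in> I \<Longrightarrow> 0 \<le> x i" "\<mu> > 0"
    and sum_eq: "(\<Sum>i\<in>I. x i) = card I * \<mu>"
  shows "card I * \<mu> ^ n \<le> (\<Sum>i\<in>I. x i ^ n)"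
proof -
  have "(\<Sum>i\<in>I. \<mu> ^ n + real n * \<mu> ^ (n - 1) * (x i - \<mu>)) \<le> (\<Sum>i\<in>I. x i ^ n)"
    using assms power_ge_tangent_line by (intro sum_mono) auto
  also have "(\<Sum>i\<in>I. \<mu> ^ n + real n * \<mu> ^ (n - 1) * (x i - \<mu>))
      = card I * \<mu> ^ n + real n * \<mu> ^ (n - 1) * ((\<Sum>i\<in>I. x i) - card I * \<mu>)"
    by (simp add: sum.distrib sum_distrib_left[symmetric] sum_subtractf)
  finally show ?thesis
    using sum_eq by simp
qed

lemma weighted_deviation_moment_ratio_le:
  fixes x :: "'a \<Rightarrow> real" and \<mu> :: real
  assumes "finite I" "I \<noteq> {}" and nonneg: "\<And>i. i \<in> I \<Longrightarrow> 0 \<le> x i" and "\<mu> > 0"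
    and sum_eq: "(\<Sum>i\<in>I. x i) = card I * \<mu>"
  shows "(\<Sum>i\<in>I. x i * \<bar>x i - \<mu>\<bar> ^ K) / (\<Sum>i\<in>I. x i ^ Suc K)
    \<le> (sqrt (\<Sum>i\<in>I. (x i - \<mu>) ^ 2) / \<mu>) ^ K"
proof -
  define S where "S = sqrt (\<Sum>i\<in>I. (x i - \<mu>) ^ 2)"
  have card_pos: "real (card I) > 0"
    using assms(1,2) by (simp add: card_gt_0_iff)
  have "S \<ge> 0"
    unfolding S_def by (simp add: sum_nonneg)
  have deviation_le: "\<bar>x i - \<mu>\<bar> \<le> S" if "i \<in> I" for i
  proof -
    have "(x i - \<mu>) ^ 2 \<le> (\<Sum>i\<in>I. (x i - \<mu>) ^ 2)"
      using that assms(1) by (intro member_le_sum) auto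
    then show ?thesis
      unfolding S_def by (metis real_sqrt_abs real_sqrt_le_mono)
  qed
  have "(\<Sum>i\<in>I. x i * \<bar>x i - \<mu>\<bar> ^ K) \<le> (\<Sum>i\<in>I. x i * S ^ K)"
    using nonneg deviation_le by (intro sum_mono mult_left_mono power_mono) auto
  also have "\<dots> = S ^ K * (card I * \<mu>)"
    using sum_eq by (simp add: sum_distrib_right[symmetric] mult.commute)
  finally have numerator_le: "(\<Sum>i\<in>I. x i * \<bar>x i - \<mu>\<bar> ^ K) \<le> S ^ K * (card I * \<mu>)" .
  have denominator_ge: "card I * \<mu> ^ Suc K \<le> (\<Sum>i\<in>I. x i ^ Suc K)"
    using assms by (intro card_mult_mean_power_le_sum_power) auto
  have "(\<Sum>i\<in>I. x i * \<bar>x i - \<mu>\<bar> ^ K) / (\<Sum>i\<in>I. x i ^ Suc K)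
      \<le> S ^ K * (card I * \<mu>) / (card I * \<mu> ^ Suc K)"
    using numerator_le denominator_ge card_pos \<open>\<mu> > 0\<close> \<open>S \<ge> 0\<close>
    by (intro frac_le) auto
  also have "\<dots> = (S / \<mu>) ^ K"
    using card_pos \<open>\<mu> > 0\<close> by (simp add: power_divide)
  finally show ?thesis
    unfolding S_def .
qed

lemma card_nondominant_indices: "real (card {2..(2::nat) ^ Nq}) = 2 ^ Nq - 1"
  by (cases Nq) (simp_all add: of_nat_diff)

lemma card_nondominant_indices_ge_1: "1 \<le> Nq \<Longrightarrow> 1 \<le> real (card {2..(2::nat) ^ Nq})"
  unfolding card_nondominant_indices using one_le_power[of "2::real" "Nq - 1"]
  by (cases Nq) auto

lemma Exp_nd_eq_mean:
  "Exp_nd Nq lam g = (\<Sum>i\<in>{2..2 ^ Nq}. g (lam i)) / card {2..(2::nat) ^ Nq}"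
  unfolding Exp_nd_def card_nondominant_indices by simp

lemma sum_nondominant_eq_card_mult_mu_nd:
  assumes "1 \<le> Nq"
  shows "(\<Sum>i\<in>{2..2 ^ Nq}. lam i) = card {2..(2::nat) ^ Nq} * mu_nd Nq lam"
proof -
  define M where "M = real (card {2..(2::nat) ^ Nq})"
  have "M \<ge> 1"
    unfolding M_def by (rule card_nondominant_indices_ge_1[OF assms])
  then show ?thesis
    unfolding mu_nd_def Exp_nd_eq_mean M_def[symmetric] by simp
qed

lemma mu_nd_le_one:
  assumes "1 \<le> Nq" and "(\<Sum>i = 1..2 ^ Nq. lam i) = 1" and "0 \<le> lam 1"
    and "\<And>i. i \<in> {2..2 ^ Nq} \<Longrightarrow> 0 \<le> lam i"
  shows "mu_nd Nq lam \<le> 1"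
proof -
  define M where "M = real (card {2..(2::nat) ^ Nq})"
  have "M \<ge> 1"
    unfolding M_def by (rule card_nondominant_indices_ge_1[OF assms(1)])
  have sum_eq: "(\<Sum>i\<in>{2..2 ^ Nq}. lam i) = M * mu_nd Nq lam"
    unfolding M_def by (rule sum_nondominant_eq_card_mult_mu_nd[OF assms(1)])
  have "(\<Sum>i\<in>{2..2 ^ Nq}. lam i) \<le> 1"
    using assms(2,3) by (simp add: sum.atLeast_Suc_atMost numeral_2_eq_2)
  moreover have "mu_nd Nq lam \<le> (\<Sum>i\<in>{2..2 ^ Nq}. lam i)"
  proof -
    have "0 \<le> M * mu_nd Nq lam"
      unfolding sum_eq[symmetric] using assms(4) by (auto intro: sum_nonneg)
    then show ?thesis
      unfolding sum_eq using \<open>M \<ge> 1\<close> by (simp add: mult_le_cancel_right1 zero_le_mult_iff)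
  qed
  ultimately show ?thesis
    by linarith
qed

lemma error_ratio_const:
  assumes "1 \<le> Nq" and "\<And>i. i \<in> {2..2 ^ Nq} \<Longrightarrow> 0 \<le> lam i"
  shows "error_ratio Nq N lam (\<lambda>_. c)
    = (\<Sum>i\<in>{2..2 ^ Nq}. lam i * \<bar>lam i - c\<bar> ^ (N - 1)) / (\<Sum>i\<in>{2..2 ^ Nq}. lam i ^ Suc (N - 1))"
proof -
  define M where "M = real (card {2..(2::nat) ^ Nq})"
  have "M > 0"
    using card_nondominant_indices_ge_1[OF assms(1)] unfolding M_def[symmetric] by simp
  have "eps_tilde Nq N lam (\<lambda>_. c') = (\<Sum>i\<in>{2..2 ^ Nq}. lam i * \<bar>lam i - c'\<bar> ^ (N - 1)) / M"
    for c'
    unfolding eps_tilde_def Exp_nd_eq_mean M_def[symmetric] using assms(2)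
    by (auto simp: abs_mult power_abs intro!: sum.cong)
  moreover have "(\<Sum>i\<in>{2..2 ^ Nq}. lam i * \<bar>lam i - 0\<bar> ^ (N - 1)) = (\<Sum>i\<in>{2..2 ^ Nq}. lam i ^ Suc (N - 1))"
    using assms(2) by (auto intro!: sum.cong)
  ultimately show ?thesis
    unfolding error_ratio_def using \<open>M > 0\<close> by simp
qed

lemma bandwidth_mult_sqrt:
  assumes "1 \<le> Nq"
  shows "bandwidth Nq lam * sqrt (2 ^ Nq - 1)
    = sqrt (\<Sum>i\<in>{2..2 ^ Nq}. (lam i - mu_nd Nq lam) ^ 2) / mu_nd Nq lam"
proof -
  define M where "M = real (card {2..(2::nat) ^ Nq})"
  have "M > 0"
    using card_nondominant_indices_ge_1[OF assms(1)] unfolding M_def[symmetric] by simp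
  then show ?thesis
    unfolding bandwidth_def Exp_nd_eq_mean card_nondominant_indices[symmetric] M_def[symmetric]
    by (simp add: real_sqrt_divide)
qed

theorem proposition2:
  fixes Nq N :: nat and \<rho> :: "complex mat" and lam :: "nat \<Rightarrow> real"
  assumes "Nq \<ge> 1" and "N \<ge> 2"
    and "density_matrix (2 ^ Nq) \<rho>"
    and "char_poly \<rho> = (\<Prod>i = 1..2 ^ Nq. [:- complex_of_real (lam i), 1:])"
    and "\<And>i j. 1 \<le> i \<Longrightarrow> i \<le> j \<Longrightarrow> j \<le> 2 ^ Nq \<Longrightarrow> lam j \<le> lam i"
    and "\<And>i. 1 \<le> i \<Longrightarrow> i \<le> 2 ^ Nq \<Longrightarrow> 0 \<le> lam i"
    and "mu_nd Nq lam > 0"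
  shows "error_ratio Nq N lam (\<lambda>_. mu_nd Nq lam)
           \<le> (1 / mu_nd Nq lam) * (bandwidth Nq lam * sqrt (2 ^ Nq - 1)) ^ (N - 1)"
proof -
  define I where "I = {2..(2::nat) ^ Nq}"
  define \<mu> where "\<mu> = mu_nd Nq lam"
  define S where "S = sqrt (\<Sum>i\<in>I. (lam i - \<mu>) ^ 2)"
  have nonneg: "\<And>i. i \<in> I \<Longrightarrow> 0 \<le> lam i"
    using assms(6) unfolding I_def by simp
  have "I \<noteq> {}"
    using assms(1) unfolding I_def by (simp add: self_le_power)
  have "\<mu> > 0" "S \<ge> 0"
    using assms(7) unfolding \<mu>_def S_def by (auto intro: sum_nonneg)
  have "\<mu> \<le> 1"
    using mu_nd_le_one[OF assms(1) density_matrix_eigenvalues_sum[OF assms(3,4)]] assms(6) nonneg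
    unfolding \<mu>_def I_def by simp
  have "error_ratio Nq N lam (\<lambda>_. \<mu>)
      = (\<Sum>i\<in>I. lam i * \<bar>lam i - \<mu>\<bar> ^ (N - 1)) / (\<Sum>i\<in>I. lam i ^ Suc (N - 1))"
    using error_ratio_const[OF assms(1)] nonneg unfolding I_def by blast
  also have "\<dots> \<le> (S / \<mu>) ^ (N - 1)"
    unfolding S_def using \<open>I \<noteq> {}\<close> nonneg \<open>\<mu> > 0\<close> sum_nondominant_eq_card_mult_mu_nd[OF assms(1)]
    by (intro weighted_deviation_moment_ratio_le) (auto simp: I_def \<mu>_def)
  also have "\<dots> \<le> (1 / \<mu>) * (S / \<mu>) ^ (N - 1)"
    using \<open>\<mu> \<le> 1\<close> \<open>\<mu> > 0\<close> \<open>S \<ge> 0\<close> by (simp add: le_divide_eq mult_left_le)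
  finally show ?thesis
    unfolding \<mu>_def S_def I_def bandwidth_mult_sqrt[OF assms(1)] .
qed

end
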